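(* Let $T$ be a basic maximal rigid object of $\mathcal{C}_n$ with top summand $T_1=(1,n-1)$, and let $X,Y\in\mathcal{F}$ with $X,Y\notin\operatorname{add}\tau T$. If $\sigma^{\mathcal{T}}_X=\sigma^{\mathcal{T}}_Y$ and $\sigma^{\mathcal{D}}_X=\sigma^{\mathcal{D}}_Y$, then $X=Y$.
   Context: Let $k$ be algebraically closed, $n\ge2$, $\mathcal{T}_n$ the tube of rank $n$ (finite-dimensional nilpotent representations of the cyclically oriented $\tilde A_{n-1}$-quiver; AR-translation $\tau$), $\mathcal{C}_n=D^b(\mathcal{T}_n)/\tau^{-1}[1]$ the cluster tube, with indecomposables identified with those of $\mathcal{T}_n$. Indecomposables have coordinates $(a,b)$, $a\in\mathbb{Z}/n$ (represented in $\{1,\dots,n\}$), $b\ge1$ the quasilength, with $\tau(a,b)=(a-1,b)$ and irreducible maps $(a,b)\to(a,b+1)$, $(a,b)\to(a+1,b-1)$. For indecomposables $X,Y$, $\operatorname{Hom}_{\mathcal{C}_n}(X,Y)=\operatorname{Hom}_{\mathcal{T}_n}(X,Y)\oplus\operatorname{Hom}_{D^b}(X,\tau^{-1}Y[1])$; elements of the first summand are $\mathcal{T}$-maps, of the second $\mathcal{D}$-maps. $R^{\mathcal{T}}(X)$ (resp. $R^{\mathcal{D}}(X)$) is the set of indecomposables with a nonzero $\mathcal{T}$-map (resp. $\mathcal{D}$-map) to $X$. Wing of $X=(a,i)$, $i\le n-1$: $\{(a+s,i'):s\ge0,i'\ge1,s+i'\le i\}$. $T=\bigoplus_{i=1}^{n-1}T_i$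 is basic maximal rigid ($\operatorname{Ext}^1(T,T)=0$ and $\operatorname{Ext}^1(T\oplus Z,T\oplus Z)=0\Rightarrow Z\in\operatorname{add}T$); its unique summand of quasilength $n-1$ (top summand) is, by choice of coordinates, $T_1=(1,n-1)$. $\mathcal{F}$ is the set of indecomposables $(a,b)$, $a\in\{1,\dots,n\}$, with $b\le n-1$ or $a+b\le2n-1$. The quiver of $\Lambda_T=\operatorname{End}_{\mathcal{C}_n}(T)^{\mathrm{op}}$ has a vertex for each $T_i$ and arrows $i\to j$ for maps $T_j\to T_i$ irreducible in $\operatorname{add}T$. A string is a trivial string at a vertex, or a word in arrows and formal inverses with matching endpoints, no letter followed by its inverse, and no subword of it or its inverse a zero relation of $\Lambda_T$. For $*\in\{\mathcal{T},\mathcal{D}\}$: if $R^*(X)\cap\operatorname{add}T\neq\emptyset$, $\sigma^*_X$ denotes the unique string that traverses exactly the vertices of the summands of $T$ in $R^*(X)$, each exactly once, and ends at the vertex of the one of highest quasilength; otherwise $\sigma^*_X$ is the zero string. *)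

theory Defs
  imports Main "HOL-Number_Theory.Cong"
begin

text \<open>An indecomposable is a pair
(a,b) with 1 <= a <= n (a representative of Z/n) and quasilength b >= 1.
The indecomposable (a,b) is the uniserial object with quasi-socle (a,1) and
quasi-composition factors (a,1),(a+1,1),...,(a+b-1,1) (indices mod n).\<close>

type_synonym ind = "int \<times> int"

definition ind_objs :: "int \<Rightarrow> ind set" where
  "ind_objs n = {(a, b). 1 \<le> a \<and> a \<le> n \<and> 1 \<le> b}"

text \<open>AR translation: tau (a,b) = (a-1,b), with a taken mod n in {1..n}.\<close>
definition tau :: "int \<Rightarrow> ind \<Rightarrow> ind" where
  "tau n X = (((fst X - 2) mod n) + 1, snd X)"

text \<open>Nonzero T-map (in the tube) from X=(a,b) to Y=(c,d): some nonzero quotient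
(a+s,b-s) of X (0 <= s < b) is isomorphic to a subobject (c,t), t <= d, of Y.\<close>
definition homT :: "int \<Rightarrow> ind \<Rightarrow> ind \<Rightarrow> bool" where
  "homT n X Y \<longleftrightarrow> (\<exists>s::int. 0 \<le> s \<and> s < snd X \<and> [fst X + s = fst Y] (mod n)
                         \<and> snd X - s \<le> snd Y)"

text \<open>Nonzero D-map X -> Y: Hom_D(X, tau^-1 Y[1]) = Ext^1_T(X, tau^-1 Y)
 = D Hom_T(tau^-1 Y, tau X) = D Hom_T(Y, tau^2 X).\<close>
definition homD :: "int \<Rightarrow> ind \<Rightarrow> ind \<Rightarrow> bool" where
  "homD n X Y \<longleftrightarrow> homT n Y (tau n (tau n X))"

text \<open>Ext^1 in C_n: Ext^1_C(X,Y) = Hom_C(X,Y[1]) = Hom_C(X,tau Y), since [1] = tau in C_n.\<close>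
definition ext1C :: "int \<Rightarrow> ind \<Rightarrow> ind \<Rightarrow> bool" where
  "ext1C n X Y \<longleftrightarrow> homT n X (tau n Y) \<or> homD n X (tau n Y)"

text \<open>A basic object is given by its (finite) set of indecomposable summands.\<close>
definition rigid :: "int \<Rightarrow> ind set \<Rightarrow> bool" where
  "rigid n S \<longleftrightarrow> (\<forall>X\<in>S. \<forall>Y\<in>S. \<not> ext1C n X Y)"

definition basic_maximal_rigid :: "int \<Rightarrow> ind set \<Rightarrow> bool" where
  "basic_maximal_rigid n T \<longleftrightarrow> T \<subseteq> ind_objs n \<and> finite T \<and> rigid n T \<and>
     (\<forall>Z\<in>ind_objs n. rigid n (insert Z T) \<longrightarrow> Z \<in> T)"

definition F_objs :: "int \<Rightarrow> ind set" where
  "F_objs n = {(a, b) \<in> ind_objs n. b \<le> n - 1 \<or> a + b \<le> 2 * n - 1}"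

definition RT :: "int \<Rightarrow> ind \<Rightarrow> ind set" where
  "RT n X = {Z \<in> ind_objs n. homT n Z X}"

definition RD :: "int \<Rightarrow> ind \<Rightarrow> ind set" where
  "RD n X = {Z \<in> ind_objs n. homD n Z X}"

text \<open>The string sigma^*_X is, by definition, the unique string traversing exactly
the vertices of the summands of T in R^*(X) (each once) and ending at the one of
highest quasilength, or the zero string if there are none.  Hence sigma^*_X is
determined by, and determines, the vertex set below.\<close>
definition sigma_vertices :: "ind set \<Rightarrow> (int \<Rightarrow> ind \<Rightarrow> ind set) \<Rightarrow> int \<Rightarrow> ind \<Rightarrow> ind set" where
  "sigma_vertices T R n X = R n X \<inter> T"

end

theory Submission
  imports Defs
begin

text \<open>Summands of \<open>T\<close> lie in the wing of \<open>T\<^sub>1 = (1, n - 1)\<close>, so each is given by the interval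
\<open>[x, y] \<subseteq> [1, n - 1]\<close> of its quasi-composition factors; rigidity says that no two of these intervals
cross, and maximality that every interval crossing none of them belongs to \<open>T\<close>. For \<open>X = (a, b)\<close>
with interval \<open>[a, e]\<close>, \<open>e = a + b - 1\<close>, a summand has a T-map to \<open>X\<close> iff its interval contains \<open>a\<close>
and ends by \<open>e\<close>, and a D-map iff it contains the pivot \<open>e + 2\<close> (read mod \<open>n\<close>) and starts at least
two steps after \<open>a\<close>. The smallest summand containing \<open>a\<close>, resp. the pivot, splits there into two
summands, and testing these against \<open>\<sigma>\<^sup>T\<^sub>X\<close>, resp. \<open>\<sigma>\<^sup>D\<^sub>X\<close>, recovers \<open>a\<close>, resp. the pivot; the condition
\<open>X \<notin> add \<tau>T\<close> then pins down \<open>e\<close>.\<close>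

section \<open>Maps and extensions in the cluster tube\<close>

lemma cong_eq_if_abs_diff_less:
  fixes p q n :: int
  assumes "[p = q] (mod n)" and "\<bar>p - q\<bar> < n"
  shows "p = q"
proof (rule ccontr)
  assume "p \<noteq> q"
  moreover have "n dvd p - q"
    using assms(1) by (simp add: cong_iff_dvd_diff)
  ultimately have "\<bar>n\<bar> \<le> \<bar>p - q\<bar>"
    by (simp add: dvd_imp_le_int)
  then show False
    using assms(2) by simp
qed

lemma cong_eq_or_eq_add_if_diff_bounded:
  fixes p q n :: int
  assumes "[p = q] (mod n)" and "- n < p - q" and "p - q < 2 * n"
  shows "p = q \<or> p = q + n"
proof -
  obtain k where k: "p - q = n * k"
    using assms(1) by (auto simp: cong_iff_dvd_diff dvd_def)
  have "n > 0"
    using assms(2,3) by linarith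
  moreover have "0 < n * (k + 1)" and "0 < n * (2 - k)"
    using assms(2,3) k by (simp_all add: algebra_simps)
  ultimately have "0 < k + 1" and "0 < 2 - k"
    by (simp_all add: zero_less_mult_iff)
  then have "k = 0 \<or> k = 1"
    by auto
  then show ?thesis
    using k by auto
qed

lemma tau_eq:
  assumes "n \<ge> 2" and "1 \<le> c" and "c \<le> n"
  shows "tau n (c, d) = (if c = 1 then n else c - 1, d)"
  using assms by (auto simp: tau_def zmod_minus1 mod_pos_pos_trivial)

lemma fst_tau_cong: "[fst (tau n X) = fst X - 1] (mod n)"
  by (simp add: tau_def cong_def mod_add_left_eq)

lemma snd_tau [simp]: "snd (tau n X) = snd X"
  by (simp add: tau_def)

lemma fst_tau_tau_cong: "[fst (tau n (tau n X)) = fst X - 2] (mod n)"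
proof -
  have "[fst (tau n X) - 1 = fst X - 1 - 1] (mod n)"
    using fst_tau_cong by (rule cong_diff) (rule cong_refl)
  then show ?thesis
    using fst_tau_cong[of n "tau n X"] by (simp add: cong_trans)
qed

lemma homT_cong:
  assumes "[fst X = fst X'] (mod n)" and "snd X = snd X'"
    and "[fst Y = fst Y'] (mod n)" and "snd Y = snd Y'"
  shows "homT n X Y \<longleftrightarrow> homT n X' Y'"
  using assms unfolding homT_def
  by (metis cong_add_rcancel cong_sym cong_trans)

lemma homD_iff: "homD n X Y \<longleftrightarrow> homT n Y (fst X - 2, snd X)"
  unfolding homD_def by (rule homT_cong) (simp_all add: fst_tau_tau_cong)

lemma ext1C_iff:
  "ext1C n X Y \<longleftrightarrow> homT n X (fst Y - 1, snd Y) \<or> homT n (fst Y - 1, snd Y) (fst X - 2, snd X)"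
proof -
  have "homT n X (tau n Y) \<longleftrightarrow> homT n X (fst Y - 1, snd Y)"
    "homT n (tau n Y) (fst X - 2, snd X) \<longleftrightarrow> homT n (fst Y - 1, snd Y) (fst X - 2, snd X)"
    by (rule homT_cong; simp add: fst_tau_cong)+
  then show ?thesis
    by (simp add: ext1C_def homD_iff)
qed

text \<open>An indecomposable \<open>(c, d)\<close> of the wing of \<open>(1, n - 1)\<close> is encoded by the interval
\<open>[c, c + d - 1]\<close>; the object \<open>X = (a, b)\<close> by \<open>[a, e]\<close> with \<open>e = a + b - 1\<close>, which may exceed \<open>n\<close>.
In these terms \<open>crossing\<close>, \<open>T_map\<close> and \<open>D_map\<close> describe \<open>Ext\<^sup>1\<close>, \<open>T\<close>-maps and \<open>D\<close>-maps.\<close>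

definition crossing :: "int \<Rightarrow> int \<Rightarrow> int \<Rightarrow> int \<Rightarrow> bool" where
  "crossing x y x' y' \<longleftrightarrow> x < x' \<and> x' \<le> y + 1 \<and> y + 1 \<le> y'"

definition T_map :: "int \<Rightarrow> int \<Rightarrow> int \<Rightarrow> int \<Rightarrow> bool" where
  "T_map a e x y \<longleftrightarrow> x \<le> a \<and> a \<le> y \<and> y \<le> e"

definition D_map :: "int \<Rightarrow> int \<Rightarrow> int \<Rightarrow> int \<Rightarrow> int \<Rightarrow> bool" where
  "D_map n a e x y \<longleftrightarrow>
     (a \<le> x - 2 \<and> x - 2 \<le> e \<and> e \<le> y - 2) \<or> (a \<le> x - 2 + n \<and> x - 2 + n \<le> e \<and> e \<le> y - 2 + n)"

lemma homT_wing_iff_T_map: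
  assumes "1 \<le> x" and "x \<le> y" and "y \<le> n - 1" and "1 \<le> a" and "a \<le> n"
  shows "homT n (x, y - x + 1) (a, b) \<longleftrightarrow> T_map a (a + b - 1) x y"
proof
  assume "homT n (x, y - x + 1) (a, b)"
  then obtain s where s: "0 \<le> s" "s < y - x + 1" "[x + s = a] (mod n)" "y - x + 1 - s \<le> b"
    unfolding homT_def by auto
  have "x + s = a"
    using cong_eq_if_abs_diff_less[OF s(3)] assms s by simp
  then show "T_map a (a + b - 1) x y"
    using s unfolding T_map_def by simp
next
  assume "T_map a (a + b - 1) x y"
  then show "homT n (x, y - x + 1) (a, b)"
    unfolding homT_def T_map_def by (intro exI[of _ "a - x"]) auto
qed

lemma homD_wing_iff_D_map:
  assumes "1 \<le> x" and "x \<le> y" and "y \<le> n - 1" and "1 \<le> a" and "a \<le> n"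
    and "a + b - 1 \<le> 2 * n - 2"
  shows "homD n (x, y - x + 1) (a, b) \<longleftrightarrow> D_map n a (a + b - 1) x y"
  unfolding homD_iff fst_conv snd_conv
proof
  assume "homT n (a, b) (x - 2, y - x + 1)"
  then obtain s where s: "0 \<le> s" "s < b" "[a + s = x - 2] (mod n)" "b - s \<le> y - x + 1"
    unfolding homT_def by auto
  have "a + s = x - 2 \<or> a + s = x - 2 + n"
    using cong_eq_or_eq_add_if_diff_bounded[OF s(3)] assms s by simp
  then show "D_map n a (a + b - 1) x y"
    using s unfolding D_map_def by auto
next
  assume "D_map n a (a + b - 1) x y"
  then consider "a \<le> x - 2" "x - 2 \<le> a + b - 1" "a + b - 1 \<le> y - 2"
    | "a \<le> x - 2 + n" "x - 2 + n \<le> a + b - 1" "a + b - 1 \<le> y - 2 + n"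
    unfolding D_map_def by blast
  then show "homT n (a, b) (x - 2, y - x + 1)"
  proof cases
    case 1
    then show ?thesis
      unfolding homT_def by (intro exI[of _ "x - 2 - a"]) auto
  next
    case 2
    have "[a + (x - 2 + n - a) = x - 2] (mod n)"
      using mod_add_self2[of "x - 2" n] by (simp add: cong_def algebra_simps)
    with 2 show ?thesis
      unfolding homT_def by (intro exI[of _ "x - 2 + n - a"]) auto
  qed
qed

lemma rigid_summand_in_top_wing:
  assumes "T \<subseteq> ind_objs n" and "rigid n T" and "(1, n - 1) \<in> T" and "(c, d) \<in> T"
  shows "1 \<le> c \<and> 1 \<le> d \<and> c + d \<le> n"
proof -
  have cd: "1 \<le> c" "c \<le> n" "1 \<le> d"
    using assms(1,4) unfolding ind_objs_def by auto
  have no_ext: "\<not> homT n (c, d) (c - 1, d)" "\<not> homT n (c, d) (0, n - 1)"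
    using assms(2-4) unfolding rigid_def ext1C_iff by fastforce+
  have "d \<le> n - 1"
  proof (rule ccontr)
    assume "\<not> d \<le> n - 1"
    moreover have "[c + (n - 1) = c - 1] (mod n)"
      using mod_add_self2[of "c - 1" n] by (simp add: cong_def algebra_simps)
    ultimately have "homT n (c, d) (c - 1, d)"
      unfolding homT_def using cd by (intro exI[of _ "n - 1"]) auto
    with no_ext show False by simp
  qed
  moreover have "c + d \<le> n"
  proof (rule ccontr)
    assume "\<not> c + d \<le> n"
    with \<open>d \<le> n - 1\<close> cd have "homT n (c, d) (0, n - 1)"
      unfolding homT_def by (intro exI[of _ "n - c"]) (auto simp: cong_def)
    with no_ext show False by simp
  qed
  ultimately show ?thesis
    using cd by simp
qed

lemma ext1C_wing_iff_crossing:
  assumes "1 \<le> c" and "1 \<le> d" and "c + d \<le> n" and "1 \<le> c'" and "1 \<le> d'" and "c' + d' \<le> n"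
  shows "ext1C n (c, d) (c', d') \<longleftrightarrow>
    crossing c (c + d - 1) c' (c' + d' - 1) \<or> crossing c' (c' + d' - 1) c (c + d - 1)"
  unfolding ext1C_iff fst_conv snd_conv
proof (intro iffI; elim disjE)
  assume "homT n (c, d) (c' - 1, d')"
  then obtain s where s: "0 \<le> s" "s < d" "[c + s = c' - 1] (mod n)" "d - s \<le> d'"
    unfolding homT_def by auto
  have "c + s = c' - 1"
    using cong_eq_if_abs_diff_less[OF s(3)] assms s by simp
  with s show "crossing c (c + d - 1) c' (c' + d' - 1) \<or> crossing c' (c' + d' - 1) c (c + d - 1)"
    unfolding crossing_def by auto
next
  assume "homT n (c' - 1, d') (c - 2, d)"
  then obtain s where s: "0 \<le> s" "s < d'" "[c' - 1 + s = c - 2] (mod n)" "d' - s \<le> d"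
    unfolding homT_def by auto
  have "c' - 1 + s = c - 2"
    using cong_eq_if_abs_diff_less[OF s(3)] assms s by simp
  with s show "crossing c (c + d - 1) c' (c' + d' - 1) \<or> crossing c' (c' + d' - 1) c (c + d - 1)"
    unfolding crossing_def by auto
next
  assume "crossing c (c + d - 1) c' (c' + d' - 1)"
  then have "homT n (c, d) (c' - 1, d')"
    unfolding crossing_def homT_def by (intro exI[of _ "c' - 1 - c"]) auto
  then show "homT n (c, d) (c' - 1, d') \<or> homT n (c' - 1, d') (c - 2, d)" ..
next
  assume "crossing c' (c' + d' - 1) c (c + d - 1)"
  then have "homT n (c' - 1, d') (c - 2, d)"
    unfolding crossing_def homT_def by (intro exI[of _ "c - 1 - c'"]) auto
  then show "homT n (c, d) (c' - 1, d') \<or> homT n (c' - 1, d') (c - 2, d)" ..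
qed

lemma rigid_insert_if_noncrossing:
  assumes rigid: "rigid n T"
    and wing: "\<And>c d. (c, d) \<in> T \<Longrightarrow> 1 \<le> c \<and> 1 \<le> d \<and> c + d \<le> n"
    and new: "1 \<le> x" "1 \<le> z" "x + z \<le> n"
    and noncrossing: "\<And>c d. (c, d) \<in> T \<Longrightarrow>
      \<not> crossing x (x + z - 1) c (c + d - 1) \<and> \<not> crossing c (c + d - 1) x (x + z - 1)"
  shows "rigid n (insert (x, z) T)"
proof -
  have "\<not> ext1C n (x, z) (x, z)"
    using ext1C_wing_iff_crossing[OF new new] by (simp add: crossing_def)
  moreover have "\<not> ext1C n (x, z) (c, d) \<and> \<not> ext1C n (c, d) (x, z)" if "(c, d) \<in> T" for c d
  proof -
    have "1 \<le> c" "1 \<le> d" "c + d \<le> n"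
      using wing[OF that] by auto
    then show ?thesis
      using ext1C_wing_iff_crossing[OF new] ext1C_wing_iff_crossing[OF _ _ _ new]
        noncrossing[OF that] by blast
  qed
  ultimately show ?thesis
    using rigid unfolding rigid_def by (auto simp: Ball_def)
qed

section \<open>Maximal non-crossing families of intervals\<close>

locale maximal_noncrossing =
  fixes n :: int and I :: "int \<Rightarrow> int \<Rightarrow> bool"
  assumes interval_bounds: "I x y \<Longrightarrow> 1 \<le> x \<and> x \<le> y \<and> y \<le> n - 1"
    and noncrossing: "I x y \<Longrightarrow> I x' y' \<Longrightarrow> \<not> crossing x y x' y'"
    and maximal: "\<lbrakk>1 \<le> x; x \<le> y; y \<le> n - 1;
      \<And>x' y'. I x' y' \<Longrightarrow> \<not> crossing x y x' y' \<and> \<not> crossing x' y' x y\<rbrakk> \<Longrightarrow> I x y"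
    and top_interval: "I 1 (n - 1)"
begin

lemma ex_smallest_interval_containing:
  assumes "1 \<le> p" and "p \<le> n - 1"
  shows "\<exists>l r. I l r \<and> l \<le> p \<and> p \<le> r \<and> (\<forall>x y. I x y \<and> x \<le> p \<and> p \<le> y \<longrightarrow> x \<le> l \<and> r \<le> y)"
proof -
  let ?C = "\<lambda>(x, y). I x y \<and> x \<le> p \<and> p \<le> y"
  obtain l r where lr: "?C (l, r)" and least: "\<And>x y. ?C (x, y) \<Longrightarrow> nat (r - l) \<le> nat (y - x)"
    using ex_has_least_nat[of ?C "(1, n - 1)" "\<lambda>(x, y). nat (y - x)"] top_interval assms
    by fastforce
  \<comment> \<open>intervals of the family containing \<open>p\<close> are nested, so one of least width lies in all others\<close>
  have "x \<le> l \<and> r \<le> y" if "?C (x, y)" for x y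
  proof (rule ccontr)
    assume "\<not> (x \<le> l \<and> r \<le> y)"
    then have "nat (y - x) < nat (r - l)"
      using that lr noncrossing[of x y l r] noncrossing[of l r x y] by (auto simp: crossing_def)
    with least[OF that] show False
      by simp
  qed
  with lr show ?thesis
    by auto
qed

lemma smallest_interval_containing:
  assumes "1 \<le> p" and "p \<le> n - 1"
  obtains l r where "I l r" and "l \<le> p" and "p \<le> r"
    and "\<And>x y. I x y \<Longrightarrow> x \<le> p \<Longrightarrow> p \<le> y \<Longrightarrow> x \<le> l \<and> r \<le> y"
    and "l < p \<Longrightarrow> I l (p - 1)" and "p < r \<Longrightarrow> I (p + 1) r"
proof -
  obtain l r where lr: "I l r" "l \<le> p" "p \<le> r"
    and smallest: "\<And>x y. I x y \<Longrightarrow> x \<le> p \<Longrightarrow> p \<le> y \<Longrightarrow> x \<le> l \<and> r \<le> y"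
    using ex_smallest_interval_containing[OF assms] by blast
  have "I l (p - 1)" if "l < p"
  proof (rule maximal)
    fix x' y'
    assume "I x' y'"
    then show "\<not> crossing l (p - 1) x' y' \<and> \<not> crossing x' y' l (p - 1)"
      using smallest[of x' y'] noncrossing[OF \<open>I x' y'\<close> lr(1)] lr by (auto simp: crossing_def)
  qed (use that lr interval_bounds[OF lr(1)] in auto)
  moreover have "I (p + 1) r" if "p < r"
  proof (rule maximal)
    fix x' y'
    assume "I x' y'"
    then show "\<not> crossing (p + 1) r x' y' \<and> \<not> crossing x' y' (p + 1) r"
      using smallest[of x' y'] noncrossing[OF lr(1) \<open>I x' y'\<close>] lr by (auto simp: crossing_def)
  qed (use that lr interval_bounds[OF lr(1)] in auto)
  ultimately show ?thesis
    using that lr smallest by blast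
qed

text \<open>The intervals of the objects of \<open>\<F>\<close> outside \<open>\<tau>T\<close>: the last two conditions say that
\<open>\<tau>\<^sup>-\<^sup>1X\<close>, which is \<open>(a + 1, e - a + 1)\<close> for \<open>a < n\<close> and \<open>(1, e - n + 1)\<close> for \<open>a = n\<close>, is no summand.\<close>

definition admissible :: "int \<Rightarrow> int \<Rightarrow> bool" where
  "admissible a e \<longleftrightarrow> 1 \<le> a \<and> a \<le> n \<and> a \<le> e \<and> e \<le> 2 * n - 2 \<and>
     (a \<le> n - 1 \<longrightarrow> \<not> I (a + 1) (e + 1)) \<and> (a = n \<longrightarrow> \<not> I 1 (e + 1 - n))"

definition RT_summands :: "int \<Rightarrow> int \<Rightarrow> (int \<times> int) set" where
  "RT_summands a e = {(x, y). I x y \<and> T_map a e x y}"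

definition RD_summands :: "int \<Rightarrow> int \<Rightarrow> (int \<times> int) set" where
  "RD_summands a e = {(x, y). I x y \<and> D_map n a e x y}"

definition RD_pivot :: "int \<Rightarrow> int" where
  "RD_pivot e = (if e \<le> n - 3 then e + 2 else e + 2 - n)"

lemma summands_nonempty_if_start_below:
  assumes X: "admissible a e" and a: "a \<le> n - 1"
  shows "RT_summands a e \<noteq> {} \<or> RD_summands a e \<noteq> {}"
proof -
  have "1 \<le> a"
    using X unfolding admissible_def by simp
  then obtain l r where lr: "I l r" "l \<le> a" "a \<le> r"
    and smallest: "\<And>x y. I x y \<Longrightarrow> x \<le> a \<Longrightarrow> a \<le> y \<Longrightarrow> x \<le> l \<and> r \<le> y"
    and right: "a < r \<Longrightarrow> I (a + 1) r"
    using smallest_interval_containing[OF _ a] by metis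
  show ?thesis
  proof (cases "r \<le> e")
    case True
    with lr have "(l, r) \<in> RT_summands a e"
      unfolding RT_summands_def T_map_def by simp
    then show ?thesis
      by blast
  next
    case False
    moreover have "r \<noteq> e + 1"
      using right X a unfolding admissible_def by auto
    ultimately have r: "e + 2 \<le> r" "r \<le> n - 1"
      using interval_bounds[OF lr(1)] by auto
    moreover have "1 \<le> e + 2"
      using X unfolding admissible_def by simp
    ultimately obtain l' r' where lr': "I l' r'" "l' \<le> e + 2" "e + 2 \<le> r'"
      and left': "l' < e + 2 \<Longrightarrow> I l' (e + 2 - 1)"
      using smallest_interval_containing[of "e + 2"] by (metis order.trans)
    have left_child: "I l' (e + 1)" if "l' < e + 2"
      using left'[OF that] by (simp add: add.commute)
    have "a + 2 \<le> l'"
    proof (rule ccontr)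
      assume "\<not> a + 2 \<le> l'"
      then have "I l' (e + 1)" and "l' \<noteq> a + 1"
        using left_child X a unfolding admissible_def by auto
      then have "r \<le> e + 1"
        using smallest[of l' "e + 1"] \<open>\<not> a + 2 \<le> l'\<close> X unfolding admissible_def by auto
      with r show False
        by simp
    qed
    with lr' r have "(l', r') \<in> RD_summands a e"
      unfolding RD_summands_def D_map_def by auto
    then show ?thesis
      by blast
  qed
qed

lemma RD_summands_nonempty_if_start_top:
  assumes X: "admissible n e"
  shows "RD_summands n e \<noteq> {}"
proof -
  have "e \<noteq> 2 * n - 2"
    using X top_interval unfolding admissible_def by auto
  then have p: "1 \<le> e + 2 - n" "e + 2 - n \<le> n - 1"
    using X unfolding admissible_def by auto
  obtain l r where lr: "I l r" "l \<le> e + 2 - n" "e + 2 - n \<le> r"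
    and left: "l < e + 2 - n \<Longrightarrow> I l (e + 2 - n - 1)"
    using smallest_interval_containing[OF p] by metis
  have "l \<noteq> 1"
  proof
    assume "l = 1"
    then have "I 1 (e + 2 - n - 1)"
      using left X unfolding admissible_def by auto
    with X show False
      unfolding admissible_def by (simp add: algebra_simps)
  qed
  with lr interval_bounds[OF lr(1)] have "(l, r) \<in> RD_summands n e"
    unfolding RD_summands_def D_map_def by auto
  then show ?thesis
    by blast
qed

lemma RT_or_RD_summands_nonempty:
  assumes "admissible a e"
  shows "RT_summands a e \<noteq> {} \<or> RD_summands a e \<noteq> {}"
proof (cases "a \<le> n - 1")
  case True
  with assms show ?thesis
    by (rule summands_nonempty_if_start_below)
next
  case False
  with assms have "a = n"
    unfolding admissible_def by simp
  with assms RD_summands_nonempty_if_start_top show ?thesis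
    by blast
qed

lemma RT_summands_determine_start:
  assumes eq: "RT_summands a e = RT_summands a' e'" and ne: "RT_summands a e \<noteq> {}"
  shows "a = a'"
proof -
  obtain x0 y0 where x0: "I x0 y0" "T_map a e x0 y0"
    using ne unfolding RT_summands_def by auto
  then have "1 \<le> a" "a \<le> n - 1"
    using interval_bounds[OF x0(1)] unfolding T_map_def by auto
  then obtain l r where lr: "I l r" "l \<le> a" "a \<le> r"
    and smallest: "\<And>x y. I x y \<Longrightarrow> x \<le> a \<Longrightarrow> a \<le> y \<Longrightarrow> x \<le> l \<and> r \<le> y"
    and left: "l < a \<Longrightarrow> I l (a - 1)" and right: "a < r \<Longrightarrow> I (a + 1) r"
    by (rule smallest_interval_containing) blast
  have "r \<le> e"
    using smallest[OF x0(1)] x0(2) unfolding T_map_def by auto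
  with lr eq have "(l, r) \<in> RT_summands a' e'"
    unfolding RT_summands_def T_map_def by auto
  then have lr': "l \<le> a'" "a' \<le> r" "r \<le> e'"
    unfolding RT_summands_def T_map_def by auto
  show "a = a'"
  proof (rule ccontr)
    assume "a \<noteq> a'"
    then consider "a < a'" | "a' < a"
      by linarith
    then show False
    proof cases
      case 1
      with right lr' have "(a + 1, r) \<in> RT_summands a' e'"
        unfolding RT_summands_def T_map_def by auto
      with eq have "(a + 1, r) \<in> RT_summands a e"
        by simp
      then show False
        unfolding RT_summands_def T_map_def by auto
    next
      case 2
      with left lr lr' have "(l, a - 1) \<in> RT_summands a' e'"
        unfolding RT_summands_def T_map_def by auto
      with eq have "(l, a - 1) \<in> RT_summands a e"
        by simp
      then show False
        unfolding RT_summands_def T_map_def by auto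
    qed
  qed
qed

lemma D_map_pivot:
  assumes X: "admissible a e" and "I x y" and "D_map n a e x y"
  shows "x \<le> RD_pivot e \<and> RD_pivot e \<le> y"
    and "\<And>x' y'. x \<le> x' \<Longrightarrow> x' \<le> RD_pivot e \<Longrightarrow> RD_pivot e \<le> y' \<Longrightarrow> D_map n a e x' y'"
proof -
  have bounds: "1 \<le> x" "y \<le> n - 1" "1 \<le> a" "a \<le> e" "e \<le> 2 * n - 2"
    using interval_bounds[OF assms(2)] X unfolding admissible_def by auto
  have "x \<le> RD_pivot e \<and> RD_pivot e \<le> y \<and>
    (\<forall>x' y'. x \<le> x' \<longrightarrow> x' \<le> RD_pivot e \<longrightarrow> RD_pivot e \<le> y' \<longrightarrow> D_map n a e x' y')"
  proof (cases "e \<le> n - 3")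
    case True
    with assms(3) bounds have "a \<le> x - 2 \<and> x - 2 \<le> e \<and> e \<le> y - 2"
      unfolding D_map_def by linarith
    with True show ?thesis
      unfolding RD_pivot_def D_map_def by auto
  next
    case False
    with assms(3) bounds have "a \<le> x - 2 + n \<and> x - 2 + n \<le> e \<and> e \<le> y - 2 + n"
      unfolding D_map_def by linarith
    with False show ?thesis
      unfolding RD_pivot_def D_map_def by auto
  qed
  then show "x \<le> RD_pivot e \<and> RD_pivot e \<le> y"
    and "\<And>x' y'. x \<le> x' \<Longrightarrow> x' \<le> RD_pivot e \<Longrightarrow> RD_pivot e \<le> y' \<Longrightarrow> D_map n a e x' y'"
    by auto
qed

lemma RD_summands_determine_pivot:
  assumes X: "admissible a e" and Y: "admissible a' e'"
    and eq: "RD_summands a e = RD_summands a' e'" and ne: "RD_summands a e \<noteq> {}"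
  shows "RD_pivot e = RD_pivot e'"
proof -
  obtain x0 y0 where x0: "I x0 y0" "D_map n a e x0 y0"
    using ne unfolding RD_summands_def by auto
  define p where "p = RD_pivot e"
  have "1 \<le> p" "p \<le> n - 1"
    using D_map_pivot(1)[OF X x0] interval_bounds[OF x0(1)] unfolding p_def by auto
  then obtain l r where lr: "I l r" "l \<le> p" "p \<le> r"
    and smallest: "\<And>x y. I x y \<Longrightarrow> x \<le> p \<Longrightarrow> p \<le> y \<Longrightarrow> x \<le> l \<and> r \<le> y"
    and left: "l < p \<Longrightarrow> I l (p - 1)" and right: "p < r \<Longrightarrow> I (p + 1) r"
    by (rule smallest_interval_containing) blast
  have "D_map n a e l r"
    using D_map_pivot[OF X x0] smallest[OF x0(1)] lr unfolding p_def by auto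
  with lr(1) eq have lrY: "D_map n a' e' l r"
    unfolding RD_summands_def by auto
  note pivotY = D_map_pivot[OF Y lr(1) lrY]
  show ?thesis
  proof (rule ccontr)
    assume "RD_pivot e \<noteq> RD_pivot e'"
    then consider "p < RD_pivot e'" | "RD_pivot e' < p"
      unfolding p_def by linarith
    then show False
    proof cases
      case 1
      with right pivotY lr have "(p + 1, r) \<in> RD_summands a' e'"
        unfolding RD_summands_def by auto
      with eq D_map_pivot(1)[OF X] show False
        unfolding RD_summands_def p_def by fastforce
    next
      case 2
      with left pivotY lr have "(l, p - 1) \<in> RD_summands a' e'"
        unfolding RD_summands_def by auto
      with eq D_map_pivot(1)[OF X] show False
        unfolding RD_summands_def p_def by fastforce
    qed
  qed
qed

lemma RT_summands_separate_ends:
  assumes X: "admissible a e" and Y: "admissible a e'" and "e < e'" and a: "a \<le> n - 1"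
    and no_RD: "RD_summands a e = {}"
  shows "RT_summands a e \<noteq> RT_summands a e'"
proof
  assume eq: "RT_summands a e = RT_summands a e'"
  have e: "e \<le> n - 2"
  proof (rule ccontr)
    assume "\<not> e \<le> n - 2"
    then have "1 \<le> e + 2 - n" "e + 2 - n \<le> n - 1"
      using \<open>e < e'\<close> Y unfolding admissible_def by auto
    then obtain l r where "I l r" "l \<le> e + 2 - n" "e + 2 - n \<le> r"
      by (rule smallest_interval_containing)
    with interval_bounds[of l r] a have "(l, r) \<in> RD_summands a e"
      unfolding RD_summands_def D_map_def by auto
    with no_RD show False
      by blast
  qed
  have "e' \<le> n - 2"
  proof (rule ccontr)
    assume "\<not> e' \<le> n - 2"
    with top_interval X a have "(1, n - 1) \<in> RT_summands a e'"
      unfolding RT_summands_def T_map_def admissible_def by auto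
    with eq have "(1, n - 1) \<in> RT_summands a e"
      by simp
    with e show False
      unfolding RT_summands_def T_map_def by auto
  qed
  with X \<open>e < e'\<close> have "1 \<le> e + 2" "e + 2 \<le> n - 1"
    unfolding admissible_def by auto
  then obtain l r where lr: "I l r" "l \<le> e + 2" "e + 2 \<le> r"
    and left: "l < e + 2 \<Longrightarrow> I l (e + 2 - 1)"
    by (rule smallest_interval_containing) blast
  have "(l, r) \<notin> RD_summands a e"
    using no_RD by blast
  with lr have "l \<le> a + 1"
    unfolding RD_summands_def D_map_def by auto
  with left X have "I l (e + 1)"
    unfolding admissible_def by (simp add: add.commute)
  moreover from this X a have "l \<noteq> a + 1"
    unfolding admissible_def by auto
  ultimately have "(l, e + 1) \<in> RT_summands a e'"
    using \<open>l \<le> a + 1\<close> \<open>e < e'\<close> X unfolding RT_summands_def T_map_def admissible_def by auto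
  with eq have "(l, e + 1) \<in> RT_summands a e"
    by simp
  then show False
    unfolding RT_summands_def T_map_def by auto
qed

lemma RD_summands_separate_wrap:
  assumes X: "admissible a e" and Y: "admissible a' (e + n)"
    and no_RT: "RT_summands a e = {}" "RT_summands a' (e + n) = {}"
    and ne: "RD_summands a e \<noteq> {}"
  shows "RD_summands a e \<noteq> RD_summands a' (e + n)"
proof
  assume eq: "RD_summands a e = RD_summands a' (e + n)"
  obtain x0 y0 where x0: "I x0 y0" "D_map n a e x0 y0"
    using ne unfolding RD_summands_def by auto
  have "1 \<le> RD_pivot e" "RD_pivot e \<le> n - 1"
    using D_map_pivot(1)[OF X x0] interval_bounds[OF x0(1)] by auto
  with Y have e: "e \<le> n - 3"
    unfolding RD_pivot_def admissible_def by (auto split: if_splits)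
  have a': "a' = n"
  proof (rule ccontr)
    assume "a' \<noteq> n"
    with top_interval X Y have "(1, n - 1) \<in> RT_summands a' (e + n)"
      unfolding RT_summands_def T_map_def admissible_def by auto
    with no_RT(2) show False
      by blast
  qed
  have "1 \<le> a" "a \<le> n - 1"
    using X e unfolding admissible_def by auto
  then obtain l r where lr: "I l r" "l \<le> a" "a \<le> r" and right: "a < r \<Longrightarrow> I (a + 1) r"
    by (rule smallest_interval_containing) blast
  have "(l, r) \<notin> RT_summands a e"
    using no_RT(1) by blast
  with lr have "e + 1 \<le> r"
    unfolding RT_summands_def T_map_def by auto
  moreover have "r \<noteq> e + 1"
    using right X \<open>a \<le> n - 1\<close> unfolding admissible_def by auto
  ultimately have "e + 2 \<le> r"
    by simp
  with right a' X have "(a + 1, r) \<in> RD_summands a' (e + n)"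
    unfolding RD_summands_def D_map_def admissible_def by auto
  with eq have "(a + 1, r) \<in> RD_summands a e"
    by simp
  with e \<open>1 \<le> a\<close> show False
    unfolding RD_summands_def D_map_def by auto
qed

lemma RD_summands_separate_starts:
  assumes X: "admissible a e" and Y: "admissible a' e" and "a < a'"
    and no_RT: "RT_summands a e = {}" "RT_summands a' e = {}"
    and ne: "RD_summands a e \<noteq> {}"
  shows "RD_summands a e \<noteq> RD_summands a' e"
proof
  assume eq: "RD_summands a e = RD_summands a' e"
  have a: "a \<le> n - 1"
    using \<open>a < a'\<close> Y unfolding admissible_def by auto
  have "e \<le> n - 2"
  proof (rule ccontr)
    assume "\<not> e \<le> n - 2"
    with top_interval X a have "(1, n - 1) \<in> RT_summands a e"
      unfolding RT_summands_def T_map_def admissible_def by auto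
    with no_RT(1) show False
      by blast
  qed
  moreover obtain x0 y0 where x0: "I x0 y0" "D_map n a e x0 y0"
    using ne unfolding RD_summands_def by auto
  then have "1 \<le> RD_pivot e" "RD_pivot e \<le> n - 1"
    using D_map_pivot(1)[OF X x0] interval_bounds[OF x0(1)] by auto
  ultimately have e: "e \<le> n - 3"
    unfolding RD_pivot_def by (auto split: if_splits)
  have "1 \<le> a'" "a' \<le> n - 1"
    using Y e unfolding admissible_def by auto
  then obtain l r where lr: "I l r" "l \<le> a'" "a' \<le> r" and right: "a' < r \<Longrightarrow> I (a' + 1) r"
    by (rule smallest_interval_containing) blast
  have "(l, r) \<notin> RT_summands a' e"
    using no_RT(2) by blast
  with lr have "e + 1 \<le> r"
    unfolding RT_summands_def T_map_def by auto
  moreover have "r \<noteq> e + 1"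
    using right Y \<open>a' \<le> n - 1\<close> unfolding admissible_def by auto
  ultimately have "e + 2 \<le> r"
    by simp
  with right \<open>a < a'\<close> Y have "(a' + 1, r) \<in> RD_summands a e"
    unfolding RD_summands_def D_map_def admissible_def by auto
  with eq have "(a' + 1, r) \<in> RD_summands a' e"
    by simp
  with e \<open>1 \<le> a'\<close> show False
    unfolding RD_summands_def D_map_def by auto
qed

theorem admissible_eq_if_summands_eq:
  assumes X: "admissible a e" and Y: "admissible a' e'"
    and eqT: "RT_summands a e = RT_summands a' e'"
    and eqD: "RD_summands a e = RD_summands a' e'"
  shows "a = a' \<and> e = e'"
proof (cases "RT_summands a e = {}")
  case False
  with eqT have a: "a = a'"
    by (rule RT_summands_determine_start)
  from False have "a \<le> n - 1"
    using interval_bounds unfolding RT_summands_def T_map_def by fastforce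
  have "e = e'"
  proof (cases "RD_summands a e = {}")
    case True
    with eqD have "RD_summands a e' = {}"
      using a by simp
    with True X Y eqT \<open>a \<le> n - 1\<close> show ?thesis
      unfolding a[symmetric] by (metis RT_summands_separate_ends linorder_neq_iff)
  next
    case False
    with X Y eqD have "RD_pivot e = RD_pivot e'"
      by (rule RD_summands_determine_pivot)
    moreover have "(1, n - 1) \<in> RT_summands a e \<longleftrightarrow> (1, n - 1) \<in> RT_summands a' e'"
      using eqT by simp
    ultimately show ?thesis
      using a \<open>a \<le> n - 1\<close> X Y top_interval
      unfolding RD_pivot_def RT_summands_def T_map_def admissible_def by (auto split: if_splits)
  qed
  with a show ?thesis ..
next
  case True
  with eqT have no_RT': "RT_summands a' e' = {}"
    by simp
  from True RT_or_RD_summands_nonempty[OF X] have ne: "RD_summands a e \<noteq> {}"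
    by simp
  with X Y eqD have "RD_pivot e = RD_pivot e'"
    by (rule RD_summands_determine_pivot)
  then have "e' = e + n \<or> e = e' + n \<or> e = e'"
    unfolding RD_pivot_def by (auto split: if_splits)
  moreover have "e' \<noteq> e + n"
    using RD_summands_separate_wrap[OF X _ True _ ne] Y no_RT' eqD by blast
  moreover have "e \<noteq> e' + n"
    using RD_summands_separate_wrap[OF Y _ no_RT' _] X True eqD ne by auto
  ultimately have e: "e = e'"
    by blast
  with X Y True no_RT' ne eqD have "a = a'"
    by (metis RD_summands_separate_starts linorder_neq_iff)
  with e show ?thesis
    by simp
qed

end

section \<open>Summands of a maximal rigid object with top summand \<open>(1, n - 1)\<close>\<close>

locale tube_maximal_rigid =
  fixes n :: int and T :: "ind set"
  assumes n_ge_2: "n \<ge> 2"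
    and maximal_rigid: "basic_maximal_rigid n T"
    and top_summand: "(1, n - 1) \<in> T"
begin

lemma summands_ind_objs: "T \<subseteq> ind_objs n"
  and rigid_summands: "rigid n T"
  and maximal_summands: "Z \<in> ind_objs n \<Longrightarrow> rigid n (insert Z T) \<Longrightarrow> Z \<in> T"
  using maximal_rigid unfolding basic_maximal_rigid_def by auto

lemma summand_in_top_wing: "(c, d) \<in> T \<Longrightarrow> 1 \<le> c \<and> 1 \<le> d \<and> c + d \<le> n"
  by (rule rigid_summand_in_top_wing[OF summands_ind_objs rigid_summands top_summand])

sublocale maximal_noncrossing n "\<lambda>x y. (x, y - x + 1) \<in> T"
proof
  fix x y
  assume "(x, y - x + 1) \<in> T"
  then show "1 \<le> x \<and> x \<le> y \<and> y \<le> n - 1"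
    using summand_in_top_wing by force
next
  fix x y x' y'
  assume xy: "(x, y - x + 1) \<in> T" and xy': "(x', y' - x' + 1) \<in> T"
  then have "\<not> ext1C n (x, y - x + 1) (x', y' - x' + 1)"
    using rigid_summands unfolding rigid_def by blast
  moreover have "1 \<le> x" "1 \<le> y - x + 1" "x + (y - x + 1) \<le> n"
    and "1 \<le> x'" "1 \<le> y' - x' + 1" "x' + (y' - x' + 1) \<le> n"
    using summand_in_top_wing[OF xy] summand_in_top_wing[OF xy'] by auto
  ultimately show "\<not> crossing x y x' y'"
    using ext1C_wing_iff_crossing by simp
next
  fix x y
  assume "1 \<le> x" and "x \<le> y" and "y \<le> n - 1"
    and noncrossing: "\<And>x' y'. (x', y' - x' + 1) \<in> T \<Longrightarrow>
      \<not> crossing x y x' y' \<and> \<not> crossing x' y' x y"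
  have "rigid n (insert (x, y - x + 1) T)"
  proof (rule rigid_insert_if_noncrossing[OF rigid_summands summand_in_top_wing])
    show "1 \<le> x" "1 \<le> y - x + 1" "x + (y - x + 1) \<le> n"
      using \<open>1 \<le> x\<close> \<open>x \<le> y\<close> \<open>y \<le> n - 1\<close> by simp_all
    fix c d
    assume "(c, d) \<in> T"
    then show "\<not> crossing x (x + (y - x + 1) - 1) c (c + d - 1) \<and>
      \<not> crossing c (c + d - 1) x (x + (y - x + 1) - 1)"
      using noncrossing[of c "c + d - 1"] by simp
  qed
  moreover have "(x, y - x + 1) \<in> ind_objs n"
    using \<open>1 \<le> x\<close> \<open>x \<le> y\<close> \<open>y \<le> n - 1\<close> unfolding ind_objs_def by simp
  ultimately show "(x, y - x + 1) \<in> T"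
    using maximal_summands by blast
next
  show "(1, n - 1 - 1 + 1) \<in> T"
    using top_summand by simp
qed

lemma admissible_if_F_not_tau:
  assumes "(a, b) \<in> F_objs n" and "(a, b) \<notin> tau n ` T"
  shows "admissible a (a + b - 1)"
proof -
  have ab: "1 \<le> a" "a \<le> n" "1 \<le> b" "a + b - 1 \<le> 2 * n - 2"
    using assms(1) unfolding F_objs_def ind_objs_def by auto
  have "(a + 1, b) \<notin> T" if "a \<le> n - 1"
  proof
    assume "(a + 1, b) \<in> T"
    moreover have "tau n (a + 1, b) = (a, b)"
      using tau_eq[OF n_ge_2, of "a + 1" b] ab that by simp
    ultimately show False
      using assms(2) by force
  qed
  moreover have "(1, b) \<notin> T" if "a = n"
  proof
    assume "(1, b) \<in> T"
    moreover have "tau n (1, b) = (a, b)"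
      using tau_eq[OF n_ge_2, of 1 b] n_ge_2 that by simp
    ultimately show False
      using assms(2) by force
  qed
  ultimately show ?thesis
    using ab unfolding admissible_def by auto
qed

lemma RT_summands_eq_sigma:
  assumes "1 \<le> a" and "a \<le> n"
  shows "RT_summands a (a + b - 1) = {(x, y). (x, y - x + 1) \<in> sigma_vertices T RT n (a, b)}"
proof -
  have "T_map a (a + b - 1) x y \<longleftrightarrow> homT n (x, y - x + 1) (a, b)" if "(x, y - x + 1) \<in> T" for x y
    using homT_wing_iff_T_map[of x y n a b] interval_bounds[OF that] assms by auto
  then show ?thesis
    using summands_ind_objs unfolding RT_summands_def sigma_vertices_def RT_def by auto
qed

lemma RD_summands_eq_sigma:
  assumes "1 \<le> a" and "a \<le> n" and "a + b - 1 \<le> 2 * n - 2"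
  shows "RD_summands a (a + b - 1) = {(x, y). (x, y - x + 1) \<in> sigma_vertices T RD n (a, b)}"
proof -
  have "D_map n a (a + b - 1) x y \<longleftrightarrow> homD n (x, y - x + 1) (a, b)" if "(x, y - x + 1) \<in> T" for x y
    using homD_wing_iff_D_map[of x y n a b] interval_bounds[OF that] assms by auto
  then show ?thesis
    using summands_ind_objs unfolding RD_summands_def sigma_vertices_def RD_def by auto
qed

end

theorem lemma4p5:
  fixes n :: int and T :: "ind set" and X Y :: ind
  assumes "n \<ge> 2"
    and "basic_maximal_rigid n T"
    and "(1, n - 1) \<in> T"
    and "X \<in> F_objs n" and "Y \<in> F_objs n"
    and "X \<notin> tau n ` T" and "Y \<notin> tau n ` T"
    and "sigma_vertices T RT n X = sigma_vertices T RT n Y"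
    and "sigma_vertices T RD n X = sigma_vertices T RD n Y"
  shows "X = Y"
proof -
  interpret tube_maximal_rigid n T
    using assms(1-3) by unfold_locales
  obtain a b a' b' where X: "X = (a, b)" and Y: "Y = (a', b')"
    by fastforce
  have ab: "1 \<le> a" "a \<le> n" "a + b - 1 \<le> 2 * n - 2"
    and ab': "1 \<le> a'" "a' \<le> n" "a' + b' - 1 \<le> 2 * n - 2"
    using assms(4,5) unfolding X Y F_objs_def ind_objs_def by auto
  have "admissible a (a + b - 1)" and "admissible a' (a' + b' - 1)"
    using admissible_if_F_not_tau assms(4-7) unfolding X Y by auto
  moreover have "RT_summands a (a + b - 1) = RT_summands a' (a' + b' - 1)"
    using assms(8) RT_summands_eq_sigma ab ab' unfolding X Y by simp
  moreover have "RD_summands a (a + b - 1) = RD_summands a' (a' + b' - 1)"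
    using assms(9) RD_summands_eq_sigma ab ab' unfolding X Y by simp
  ultimately have "a = a' \<and> a + b - 1 = a' + b' - 1"
    by (rule admissible_eq_if_summands_eq)
  then show ?thesis
    unfolding X Y by simp
qed

end
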